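(* Let $(X,f,q_X)$ and $(Y,g,q_Y)$ be partially observable systems and suppose there is a morphism $(m,n):(X,f,q_X)\to(Y,g,q_Y)$ in $\mathbf{PSys}$. Then $\tilde h(X,f,q_X)\geq \tilde h(Y,g,q_Y)$. Equivalently, the assignment $(X,f,q)\mapsto \tilde h(X,f,q)$ defines a functor from $\mathbf{PSys}$ to the ordered set $([0,\infty],\geq)$ viewed as a thin category.
   Context: A dynamical system is a pair $(X,f)$ with $X$ a compact Hausdorff space and $f:X\to X$ a continuous surjection. A partially observable system is a triple $(X,f,q_X)$ where $(X,f)$ is a dynamical system and $q_X:X\to\tilde X$ is a continuous surjection onto a compact Hausdorff space $\tilde X$. A morphism $(X,f,q_X)\to(Y,g,q_Y)$ in the category $\mathbf{PSys}$ is a pair $(m,n)$ of continuous surjections $m:X\to Y$, $n:\tilde X\to\tilde Y$ with $m\circ f=g\circ m$ and $n\circ q_X=q_Y\circ m$. For a sequence of positive numbers $x_t$, $\mathrm{GR}_t(x_t)=\limsup_{t\to\infty}\frac1t\ln x_t$. For an open cover $\mathcal C$, $\#\mathcal C$ is the minimal cardinality of a finite subcover, and $\mathcal A\vee\mathcal B=\{A\cap B\}_{A\in\mathcal A,B\in\mathcal B}$. The quotient-topological entropy is $\tilde h(X,f,q)=\sup\{\mathrm{GR}_n(\#\bigvee_{i=0}^n f^{-i}(q^{-1}\mathcal U)) : \mathcal U \text{ an open cover of } \tilde X\}$, i.e. the supremum over open covers of $X$ in the topology induced by $q$. *)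

theory Defs
  imports "HOL-Analysis.Analysis"
begin

definition compact_Hausdorff :: "'a topology \<Rightarrow> bool" where
  "compact_Hausdorff X \<longleftrightarrow> compact_space X \<and> Hausdorff_space X"

definition cont_surj :: "'a topology \<Rightarrow> 'b topology \<Rightarrow> ('a \<Rightarrow> 'b) \<Rightarrow> bool" where
  "cont_surj X Y h \<longleftrightarrow> continuous_map X Y h \<and> h ` topspace X = topspace Y"

definition dyn_sys :: "'a topology \<Rightarrow> ('a \<Rightarrow> 'a) \<Rightarrow> bool" where
  "dyn_sys X f \<longleftrightarrow> compact_Hausdorff X \<and> cont_surj X X f"

definition po_sys :: "'a topology \<Rightarrow> ('a \<Rightarrow> 'a) \<Rightarrow> 'b topology \<Rightarrow> ('a \<Rightarrow> 'b) \<Rightarrow> bool" where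
  "po_sys X f Xt q \<longleftrightarrow> dyn_sys X f \<and> compact_Hausdorff Xt \<and> cont_surj X Xt q"

definition psys_morphism ::
  "'a topology \<Rightarrow> ('a \<Rightarrow> 'a) \<Rightarrow> 'b topology \<Rightarrow> ('a \<Rightarrow> 'b) \<Rightarrow>
   'c topology \<Rightarrow> ('c \<Rightarrow> 'c) \<Rightarrow> 'd topology \<Rightarrow> ('c \<Rightarrow> 'd) \<Rightarrow>
   ('a \<Rightarrow> 'c) \<Rightarrow> ('b \<Rightarrow> 'd) \<Rightarrow> bool" where
  "psys_morphism X f Xt qX Y g Yt qY m n \<longleftrightarrow>
     cont_surj X Y m \<and> cont_surj Xt Yt n \<and>
     (\<forall>x\<in>topspace X. m (f x) = g (m x)) \<and>
     (\<forall>x\<in>topspace X. n (qX x) = qY (m x))"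

definition open_cover :: "'a topology \<Rightarrow> 'a set set \<Rightarrow> bool" where
  "open_cover X U \<longleftrightarrow> (\<forall>A\<in>U. openin X A) \<and> topspace X \<subseteq> \<Union>U"

definition cover_num :: "'a topology \<Rightarrow> 'a set set \<Rightarrow> nat" where
  "cover_num X C = Inf {card F | F. F \<subseteq> C \<and> finite F \<and> topspace X \<subseteq> \<Union>F}"

definition pre_iter :: "'a topology \<Rightarrow> ('a \<Rightarrow> 'a) \<Rightarrow> ('a \<Rightarrow> 'b) \<Rightarrow> nat \<Rightarrow> 'b set \<Rightarrow> 'a set" where
  "pre_iter X f q i A = {x \<in> topspace X. q ((f ^^ i) x) \<in> A}"

definition join_cover :: "'a topology \<Rightarrow> ('a \<Rightarrow> 'a) \<Rightarrow> ('a \<Rightarrow> 'b) \<Rightarrow> 'b set set \<Rightarrow> nat \<Rightarrow> 'a set set" where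
  "join_cover X f q U n =
     {topspace X \<inter> (\<Inter>i\<in>{0..n}. pre_iter X f q i (s i)) | s. \<forall>i\<in>{0..n}. s i \<in> U}"

definition growth_rate :: "(nat \<Rightarrow> real) \<Rightarrow> ereal" where
  "growth_rate x = limsup (\<lambda>t. ereal (ln (x t) / real t))"

definition qt_entropy :: "'a topology \<Rightarrow> ('a \<Rightarrow> 'a) \<Rightarrow> 'b topology \<Rightarrow> ('a \<Rightarrow> 'b) \<Rightarrow> ereal" where
  "qt_entropy X f Xt q =
     Sup {growth_rate (\<lambda>n. real (cover_num X (join_cover X f q U n))) | U. open_cover Xt U}"

end

theory Submission
  imports Defs
begin

text \<open>Pull an open cover \<open>V\<close> of \<open>Yt\<close> back along \<open>n\<close>. Since \<open>m \<circ> f = g \<circ> m\<close> and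
  \<open>n \<circ> qX = qY \<circ> m\<close>, every member of the join of \<open>n\<^sup>-\<^sup>1 V\<close> over \<open>X\<close> is the
  \<open>m\<close>-preimage of a member of the join of \<open>V\<close> over \<open>Y\<close>, and conversely. As \<open>m\<close> is onto, a minimal
  finite subcover of the former yields a subcover of the latter of at most the same size, so the
  cover numbers, their growth rates and finally the suprema over all covers compare.\<close>

lemma continuous_map_funpow:
  assumes "continuous_map X X f"
  shows "continuous_map X X (f ^^ i)"
proof (induction i)
  case (Suc i)
  show ?case
    unfolding funpow.simps(2) by (rule continuous_map_compose[OF Suc.IH assms])
qed simp

lemma funpow_semiconj_on:
  assumes "continuous_map X X f" and "\<forall>x\<in>topspace X. m (f x) = g (m x)" and "x \<in> topspace X"
  shows "m ((f ^^ i) x) = (g ^^ i) (m x)"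
  using assms(3)
proof (induction i arbitrary: x)
  case (Suc i)
  have "f x \<in> topspace X"
    using Suc.prems continuous_map_image_subset_topspace[OF assms(1)] by blast
  then have "m ((f ^^ i) (f x)) = (g ^^ i) (g (m x))"
    using Suc.IH assms(2) Suc.prems by simp
  then show ?case
    by (simp add: funpow_swap1)
qed simp

lemma open_cover_preimage:
  assumes "continuous_map X Y h" and "open_cover Y V"
  shows "open_cover X ((\<lambda>B. {x \<in> topspace X. h x \<in> B}) ` V)"
  unfolding open_cover_def
proof (intro conjI ballI subsetI)
  show "openin X A" if "A \<in> (\<lambda>B. {x \<in> topspace X. h x \<in> B}) ` V" for A
    using that assms openin_continuous_map_preimage unfolding open_cover_def by blast
  show "x \<in> \<Union>((\<lambda>B. {x \<in> topspace X. h x \<in> B}) ` V)" if "x \<in> topspace X" for x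
  proof -
    have "h x \<in> topspace Y"
      using that continuous_map_image_subset_topspace[OF assms(1)] by blast
    then show ?thesis
      using that assms(2) unfolding open_cover_def by blast
  qed
qed

lemma open_cover_join_cover:
  assumes "continuous_map X X f" and "continuous_map X Xt q" and "open_cover Xt U"
  shows "open_cover X (join_cover X f q U k)"
proof -
  have iterate: "continuous_map X Xt (q \<circ> f ^^ i)" for i
    using continuous_map_compose[OF continuous_map_funpow[OF assms(1)] assms(2)] .
  have "openin X W" if W_in: "W \<in> join_cover X f q U k" for W
  proof -
    obtain s where s: "\<forall>i\<in>{0..k}. s i \<in> U"
      and W: "W = topspace X \<inter> (\<Inter>i\<in>{0..k}. pre_iter X f q i (s i))"
      using W_in unfolding join_cover_def by blast
    have "openin X (pre_iter X f q i (s i))" if "i \<in> {0..k}" for i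
      using openin_continuous_map_preimage[OF iterate] s that assms(3)
      unfolding pre_iter_def open_cover_def by auto
    then show ?thesis
      unfolding W by (intro openin_Int openin_INT) auto
  qed
  moreover have "x \<in> \<Union>(join_cover X f q U k)" if x: "x \<in> topspace X" for x
  proof -
    have "\<forall>i. \<exists>A\<in>U. q ((f ^^ i) x) \<in> A"
      using iterate x assms(3) unfolding open_cover_def continuous_map_def by fastforce
    then obtain s where s: "\<And>i. s i \<in> U \<and> q ((f ^^ i) x) \<in> s i"
      by metis
    then have "topspace X \<inter> (\<Inter>i\<in>{0..k}. pre_iter X f q i (s i)) \<in> join_cover X f q U k"
      unfolding join_cover_def by blast
    moreover have "x \<in> topspace X \<inter> (\<Inter>i\<in>{0..k}. pre_iter X f q i (s i))"
      using x s unfolding pre_iter_def by auto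
    ultimately show ?thesis by blast
  qed
  ultimately show ?thesis
    unfolding open_cover_def by blast
qed

lemma compact_space_finite_subcover:
  assumes "compact_space X" and "open_cover X C"
  obtains F where "F \<subseteq> C" and "finite F" and "topspace X \<subseteq> \<Union>F"
  using assms(1)[unfolded compact_space_alt, rule_format, of C] assms(2)
  unfolding open_cover_def by blast

lemma cover_num_le:
  assumes "F \<subseteq> C" and "finite F" and "topspace X \<subseteq> \<Union>F"
  shows "cover_num X C \<le> card F"
  unfolding cover_num_def using assms by (intro cInf_lower CollectI exI[of _ F]) simp_all

text \<open>Compactness is what makes the infimum in \<open>cover_num\<close> attained: without a finite
  subcover it is \<open>Inf {} = 0\<close>.\<close>

lemma cover_num_attained:
  assumes "compact_space X" and "open_cover X C"
  obtains F where "F \<subseteq> C" and "finite F" and "topspace X \<subseteq> \<Union>F" and "card F = cover_num X C"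
proof -
  define S where "S = {card F | F. F \<subseteq> C \<and> finite F \<and> topspace X \<subseteq> \<Union>F}"
  obtain F where "F \<subseteq> C" "finite F" "topspace X \<subseteq> \<Union>F"
    using compact_space_finite_subcover[OF assms] .
  then have "card F \<in> S"
    unfolding S_def by blast
  then have "Inf S \<in> S"
    by (metis Inf_nat_def1 empty_iff)
  then obtain F' where F': "Inf S = card F'" "F' \<subseteq> C" "finite F'" "topspace X \<subseteq> \<Union>F'"
    unfolding S_def mem_Collect_eq by blast
  show ?thesis
    by (rule that[OF F'(2-4)]) (simp add: cover_num_def F'(1) flip: S_def)
qed

lemma cover_num_pos:
  assumes "compact_space X" and "open_cover X C" and "topspace X \<noteq> {}"
  shows "0 < cover_num X C"
proof -
  obtain F where F: "F \<subseteq> C" "finite F" "topspace X \<subseteq> \<Union>F" "card F = cover_num X C"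
    using cover_num_attained[OF assms(1,2)] .
  with assms(3) have "F \<noteq> {}" by blast
  then show ?thesis
    using F(2,4) card_gt_0_iff by metis
qed

lemma cover_num_empty:
  assumes "topspace X = {}"
  shows "cover_num X C = 0"
  using cover_num_le[of "{}" C X] assms by simp

lemma cover_num_preimage_le:
  assumes "m ` topspace X = topspace Y" and "compact_space X"
    and "open_cover X ((\<lambda>W. {x \<in> topspace X. m x \<in> W}) ` C)"
  shows "cover_num Y C \<le> cover_num X ((\<lambda>W. {x \<in> topspace X. m x \<in> W}) ` C)"
proof -
  let ?pre = "\<lambda>W. {x \<in> topspace X. m x \<in> W}"
  obtain F where F: "F \<subseteq> ?pre ` C" "finite F" "topspace X \<subseteq> \<Union>F" "card F = cover_num X (?pre ` C)"
    using cover_num_attained[OF assms(2,3)] .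
  then obtain B where B: "B \<subseteq> C" "inj_on ?pre B" "F = ?pre ` B"
    unfolding subset_image_inj by blast
  have "finite B"
    using F(2) B by (simp add: finite_image_iff)
  moreover have "topspace Y \<subseteq> \<Union>B"
  proof
    fix y assume "y \<in> topspace Y"
    then obtain x where x: "x \<in> topspace X" "y = m x"
      using assms(1) by blast
    then obtain Z where "Z \<in> F" "x \<in> Z"
      using F(3) by blast
    then show "y \<in> \<Union>B"
      using x B(3) by blast
  qed
  ultimately have "cover_num Y C \<le> card B"
    by (intro cover_num_le[OF B(1)])
  also have "card B = card F"
    using B by (simp add: card_image)
  finally show ?thesis
    using F(4) by simp
qed

lemma preimage_pre_iter_INT:
  assumes f: "continuous_map X X f" and qX: "continuous_map X Xt qX"
    and m: "m ` topspace X \<subseteq> topspace Y"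
    and semiconj: "\<forall>x\<in>topspace X. m (f x) = g (m x)"
    and observe: "\<forall>x\<in>topspace X. n (qX x) = qY (m x)"
  shows "{x \<in> topspace X. m x \<in> topspace Y \<inter> (\<Inter>i\<in>I. pre_iter Y g qY i (s i))}
       = topspace X \<inter> (\<Inter>i\<in>I. pre_iter X f qX i {b \<in> topspace Xt. n b \<in> s i})"
proof (rule set_eqI)
  fix x
  show "x \<in> {x \<in> topspace X. m x \<in> topspace Y \<inter> (\<Inter>i\<in>I. pre_iter Y g qY i (s i))}
    \<longleftrightarrow> x \<in> topspace X \<inter> (\<Inter>i\<in>I. pre_iter X f qX i {b \<in> topspace Xt. n b \<in> s i})"
  proof (cases "x \<in> topspace X")
    case True
    have orbit: "(f ^^ i) x \<in> topspace X" for i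
      using True continuous_map_image_subset_topspace[OF continuous_map_funpow[OF f]] by blast
    have "qX ((f ^^ i) x) \<in> topspace Xt" for i
      using orbit continuous_map_image_subset_topspace[OF qX] by blast
    moreover have "n (qX ((f ^^ i) x)) = qY ((g ^^ i) (m x))" for i
      using observe orbit funpow_semiconj_on[OF f semiconj True] by metis
    moreover have "m x \<in> topspace Y"
      using True m by blast
    ultimately show ?thesis
      using True by (simp add: pre_iter_def)
  qed (simp add: pre_iter_def)
qed

lemma join_cover_preimage:
  assumes f: "continuous_map X X f" and qX: "continuous_map X Xt qX"
    and m: "m ` topspace X \<subseteq> topspace Y"
    and semiconj: "\<forall>x\<in>topspace X. m (f x) = g (m x)"
    and observe: "\<forall>x\<in>topspace X. n (qX x) = qY (m x)"
  shows "join_cover X f qX ((\<lambda>B. {b \<in> topspace Xt. n b \<in> B}) ` V) k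
       = (\<lambda>W. {x \<in> topspace X. m x \<in> W}) ` join_cover Y g qY V k"
    (is "join_cover X f qX (?pre_n ` V) k = ?pre_m ` _")
proof -
  note preimage_eq = preimage_pre_iter_INT[OF f qX m semiconj observe]
  show ?thesis
  proof
    show "join_cover X f qX (?pre_n ` V) k \<subseteq> ?pre_m ` join_cover Y g qY V k"
    proof
      fix Z assume "Z \<in> join_cover X f qX (?pre_n ` V) k"
      then obtain s' where s': "\<forall>i\<in>{0..k}. s' i \<in> ?pre_n ` V"
        and Z: "Z = topspace X \<inter> (\<Inter>i\<in>{0..k}. pre_iter X f qX i (s' i))"
        unfolding join_cover_def mem_Collect_eq by blast
      have "\<forall>i\<in>{0..k}. \<exists>B. B \<in> V \<and> s' i = ?pre_n B"
        using s' by blast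
      then obtain s where s: "\<forall>i\<in>{0..k}. s i \<in> V \<and> s' i = ?pre_n (s i)"
        by (metis bchoice)
      have "Z = ?pre_m (topspace Y \<inter> (\<Inter>i\<in>{0..k}. pre_iter Y g qY i (s i)))"
        unfolding Z preimage_eq using s by (intro arg_cong2[where f="(\<inter>)"] INF_cong) simp_all
      moreover have "topspace Y \<inter> (\<Inter>i\<in>{0..k}. pre_iter Y g qY i (s i)) \<in> join_cover Y g qY V k"
        unfolding join_cover_def using s by auto
      ultimately show "Z \<in> ?pre_m ` join_cover Y g qY V k"
        by (rule image_eqI)
    qed
    show "?pre_m ` join_cover Y g qY V k \<subseteq> join_cover X f qX (?pre_n ` V) k"
    proof
      fix Z assume "Z \<in> ?pre_m ` join_cover Y g qY V k"
      then obtain W where W: "W \<in> join_cover Y g qY V k" and Z: "Z = ?pre_m W"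
        by (rule imageE)
      obtain s where s: "\<forall>i\<in>{0..k}. s i \<in> V"
        and W_eq: "W = topspace Y \<inter> (\<Inter>i\<in>{0..k}. pre_iter Y g qY i (s i))"
        using W unfolding join_cover_def mem_Collect_eq by blast
      have "Z = topspace X \<inter> (\<Inter>i\<in>{0..k}. pre_iter X f qX i (?pre_n (s i)))"
        unfolding Z W_eq by (rule preimage_eq)
      then show "Z \<in> join_cover X f qX (?pre_n ` V) k"
        unfolding join_cover_def using s by auto
    qed
  qed
qed

lemma cover_num_join_cover_le:
  assumes X: "po_sys X f Xt qX" and mn: "psys_morphism X f Xt qX Y g Yt qY m n"
    and V: "open_cover Yt V"
  shows "cover_num Y (join_cover Y g qY V k)
       \<le> cover_num X (join_cover X f qX ((\<lambda>B. {b \<in> topspace Xt. n b \<in> B}) ` V) k)"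
proof -
  have X_compact: "compact_space X" and f: "continuous_map X X f" and qX: "continuous_map X Xt qX"
    using X unfolding po_sys_def dyn_sys_def compact_Hausdorff_def cont_surj_def by blast+
  have m_onto: "m ` topspace X = topspace Y" and n: "continuous_map Xt Yt n"
    and semiconj: "\<forall>x\<in>topspace X. m (f x) = g (m x)"
    and observe: "\<forall>x\<in>topspace X. n (qX x) = qY (m x)"
    using mn unfolding psys_morphism_def cont_surj_def by blast+
  have "open_cover X (join_cover X f qX ((\<lambda>B. {b \<in> topspace Xt. n b \<in> B}) ` V) k)"
    using open_cover_join_cover[OF f qX open_cover_preimage[OF n V]] .
  then show ?thesis
    unfolding join_cover_preimage[OF f qX equalityD1[OF m_onto] semiconj observe]
    by (rule cover_num_preimage_le[OF m_onto X_compact])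
qed

lemma growth_rate_mono:
  assumes "\<And>t. 0 < x t" and "\<And>t. x t \<le> y t"
  shows "growth_rate x \<le> growth_rate y"
  unfolding growth_rate_def
proof (intro Limsup_mono always_eventually allI)
  fix t
  have "ln (x t) \<le> ln (y t)"
    using assms by (meson ln_le_cancel_iff order.strict_trans2)
  then show "ereal (ln (x t) / real t) \<le> ereal (ln (y t) / real t)"
    by (simp add: divide_right_mono)
qed

lemma growth_rate_join_cover_le:
  assumes X: "po_sys X f Xt qX" and Y: "po_sys Y g Yt qY"
    and mn: "psys_morphism X f Xt qX Y g Yt qY m n" and V: "open_cover Yt V"
  shows "growth_rate (\<lambda>k. real (cover_num Y (join_cover Y g qY V k)))
       \<le> growth_rate (\<lambda>k. real (cover_num X (join_cover X f qX ((\<lambda>B. {b \<in> topspace Xt. n b \<in> B}) ` V) k)))"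
proof (cases "topspace X = {}")
  case True
  moreover have "m ` topspace X = topspace Y"
    using mn unfolding psys_morphism_def cont_surj_def by blast
  ultimately show ?thesis
    by (simp add: cover_num_empty)
next
  case False
  have Y_compact: "compact_space Y" and g: "continuous_map Y Y g" and qY: "continuous_map Y Yt qY"
    using Y unfolding po_sys_def dyn_sys_def compact_Hausdorff_def cont_surj_def by blast+
  have "topspace Y \<noteq> {}"
    using False mn unfolding psys_morphism_def cont_surj_def by blast
  then have "0 < cover_num Y (join_cover Y g qY V k)" for k
    using cover_num_pos[OF Y_compact open_cover_join_cover[OF g qY V]] by blast
  then show ?thesis
    using cover_num_join_cover_le[OF X mn V] by (intro growth_rate_mono) simp_all
qed

theorem mainTheorem1:
  fixes X :: "'a topology" and f :: "'a \<Rightarrow> 'a" and Xt :: "'b topology" and qX :: "'a \<Rightarrow> 'b"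
    and Y :: "'c topology" and g :: "'c \<Rightarrow> 'c" and Yt :: "'d topology" and qY :: "'c \<Rightarrow> 'd"
    and m :: "'a \<Rightarrow> 'c" and n :: "'b \<Rightarrow> 'd"
  assumes "po_sys X f Xt qX"
    and "po_sys Y g Yt qY"
    and "psys_morphism X f Xt qX Y g Yt qY m n"
  shows "qt_entropy X f Xt qX \<ge> qt_entropy Y g Yt qY"
proof -
  have "growth_rate (\<lambda>k. real (cover_num Y (join_cover Y g qY V k))) \<le> qt_entropy X f Xt qX"
    if V: "open_cover Yt V" for V
  proof -
    have "continuous_map Xt Yt n"
      using assms(3) unfolding psys_morphism_def cont_surj_def by blast
    then have "open_cover Xt ((\<lambda>B. {b \<in> topspace Xt. n b \<in> B}) ` V)"
      using V by (rule open_cover_preimage)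
    then show ?thesis
      unfolding qt_entropy_def
      by (blast intro: Sup_upper2 growth_rate_join_cover_le[OF assms V])
  qed
  then show ?thesis
    unfolding qt_entropy_def[of Y] by (blast intro: Sup_least)
qed

end
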